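(* Let $n\ge1$ and let $\Phi:\mathbb{R}^{n+1}\to[0,+\infty)$ be a norm, and set $\psi(\widehat\xi):=\Phi(\widehat\xi,0)$ for $\widehat\xi\in\mathbb{R}^n$. Then $\Phi$ is partially monotone if and only if there exists a positively one-homogeneous convex function $\omega:[0,+\infty)\times[0,+\infty)\to[0,+\infty)$ with $\omega(1,0)>0$, $\omega(0,1)>0$ and $\omega(s_1,s_2)\le\omega(t_1,t_2)$ whenever $0\le s_i\le t_i$, $i=1,2$, such that $\Phi(\widehat\xi,\xi_{n+1})=\omega(\psi(\widehat\xi),|\xi_{n+1}|)$ for all $(\widehat\xi,\xi_{n+1})\in\mathbb{R}^{n+1}$.
   Context: A norm on $\mathbb{R}^m$ is a convex function $\Psi:\mathbb{R}^m\to[0,+\infty)$ with $\Psi(\lambda\xi)=|\lambda|\Psi(\xi)$ and $\Psi(\xi)\ge c|\xi|$ for some $c>0$. The norm $\Phi$ on $\mathbb{R}^{n+1}$ is partially monotone if for all $(\widehat\xi,\xi_{n+1}),(\widehat\eta,\eta_{n+1})\in\mathbb{R}^{n+1}$: $\Phi(\widehat\xi,0)\le\Phi(\widehat\eta,0)$ and $\Phi(0,\xi_{n+1})\le\Phi(0,\eta_{n+1})$ imply $\Phi(\widehat\xi,\xi_{n+1})\le\Phi(\widehat\eta,\eta_{n+1})$. *)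

theory Defs
  imports "HOL-Analysis.Analysis"
begin

definition is_norm_fun :: "('a::real_normed_vector \<Rightarrow> real) \<Rightarrow> bool" where
  "is_norm_fun \<Psi> \<longleftrightarrow> convex_on UNIV \<Psi> \<and> (\<forall>\<xi>. \<Psi> \<xi> \<ge> 0)
     \<and> (\<forall>(l::real) \<xi>. \<Psi> (l *\<^sub>R \<xi>) = \<bar>l\<bar> * \<Psi> \<xi>)
     \<and> (\<exists>c>0. \<forall>\<xi>. \<Psi> \<xi> \<ge> c * norm \<xi>)"

text \<open>R^{n+1} is represented as (real^'n) \<times> real.\<close>
definition partially_monotone :: "(((real^'n) \<times> real) \<Rightarrow> real) \<Rightarrow> bool" where
  "partially_monotone \<Phi> \<longleftrightarrow>
     (\<forall>\<xi>h \<xi>l \<eta>h \<eta>l. \<Phi> (\<xi>h, 0) \<le> \<Phi> (\<eta>h, 0) \<and> \<Phi> (0, \<xi>l) \<le> \<Phi> (0, \<eta>l)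
        \<longrightarrow> \<Phi> (\<xi>h, \<xi>l) \<le> \<Phi> (\<eta>h, \<eta>l))"

end

theory Submission
  imports Defs
begin

text \<open>
  Choose \<open>u\<close> with \<open>\<psi>(u) = 1\<close> and let \<open>\<omega>(s, t) = \<Phi>(s u, t)\<close>; it inherits convexity,
  homogeneity and positivity from \<open>\<Phi>\<close>. Because \<open>\<Phi>(0, t) = |t| \<Phi>(0, 1)\<close>, the hypotheses of
  partial monotonicity compare \<open>\<psi>\<close>-values and absolute values of the last coordinate. As
  \<open>\<psi>(\<psi>(\<xi>) u) = \<psi>(\<xi>)\<close>, partial monotonicity applied in both directions gives
  \<open>\<Phi>(\<xi>, t) = \<omega>(\<psi>(\<xi>), |t|)\<close>, and it makes \<open>\<omega>\<close> monotone on the quadrant.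
  Conversely, such a representation with monotone \<open>\<omega>\<close> is partial monotonicity.
\<close>

definition monotone_convex_profile ::
    "((real^'n) \<times> real \<Rightarrow> real) \<Rightarrow> (real \<Rightarrow> real \<Rightarrow> real) \<Rightarrow> bool" where
  "monotone_convex_profile \<Phi> \<omega> \<longleftrightarrow>
       (\<forall>s t. s \<ge> 0 \<and> t \<ge> 0 \<longrightarrow> \<omega> s t \<ge> 0)
     \<and> (\<forall>l s t. l > 0 \<and> s \<ge> 0 \<and> t \<ge> 0 \<longrightarrow> \<omega> (l * s) (l * t) = l * \<omega> s t)
     \<and> convex_on {p :: real \<times> real. fst p \<ge> 0 \<and> snd p \<ge> 0} (\<lambda>p. \<omega> (fst p) (snd p))
     \<and> \<omega> 1 0 > 0 \<and> \<omega> 0 1 > 0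
     \<and> (\<forall>s1 s2 t1 t2. 0 \<le> s1 \<and> s1 \<le> t1 \<and> 0 \<le> s2 \<and> s2 \<le> t2 \<longrightarrow> \<omega> s1 s2 \<le> \<omega> t1 t2)
     \<and> (\<forall>\<xi>h \<xi>l. \<Phi> (\<xi>h, \<xi>l) = \<omega> (\<Phi> (\<xi>h, 0)) \<bar>\<xi>l\<bar>)"

lemma is_norm_funD:
  assumes "is_norm_fun \<Psi>"
  shows "convex_on UNIV \<Psi>" and "\<Psi> x \<ge> 0" and "\<Psi> (l *\<^sub>R x) = \<bar>l\<bar> * \<Psi> x"
  using assms unfolding is_norm_fun_def by auto

lemma is_norm_fun_pos:
  assumes "is_norm_fun \<Psi>" and "x \<noteq> 0"
  shows "\<Psi> x > 0"
proof -
  obtain c where "c > 0" and "\<Psi> x \<ge> c * norm x"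
    using assms(1) unfolding is_norm_fun_def by auto
  with assms(2) show ?thesis
    by (smt (verit) mult_pos_pos zero_less_norm_iff)
qed

lemma convex_on_compose_linear:
  assumes "convex_on UNIV f" and "linear g" and "convex S"
  shows "convex_on S (\<lambda>x. f (g x))"
  using assms unfolding convex_on_def by (simp add: linear_add linear_scale)

lemma convex_nonneg_quadrant: "convex {p :: real \<times> real. fst p \<ge> 0 \<and> snd p \<ge> 0}"
  unfolding convex_def by auto

context
  fixes \<Phi> :: "'a::real_normed_vector \<times> real \<Rightarrow> real"
  assumes norm_fun: "is_norm_fun \<Phi>"
begin

lemma norm_fun_scaleR_pair: "\<Phi> (l *\<^sub>R a, l * t) = \<bar>l\<bar> * \<Phi> (a, t)"
  using is_norm_funD(3)[OF norm_fun, of l "(a, t)"] by simp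

lemma norm_fun_vertical_pos: "\<Phi> (0, 1) > 0"
  using is_norm_fun_pos[OF norm_fun, of "(0, 1)"] by (simp add: zero_prod_def)

lemma norm_fun_vertical_le_iff: "\<Phi> (0, s) \<le> \<Phi> (0, t) \<longleftrightarrow> \<bar>s\<bar> \<le> \<bar>t\<bar>"
proof -
  have vertical: "\<Phi> (0, r) = \<bar>r\<bar> * \<Phi> (0, 1)" for r
    using norm_fun_scaleR_pair[of r 0 1] by simp
  show ?thesis
    unfolding vertical[of s] vertical[of t] by (rule mult_le_cancel_right_pos[OF norm_fun_vertical_pos])
qed

lemma norm_fun_horizontal_unit:
  fixes v :: 'a
  assumes "v \<noteq> 0"
  obtains u where "\<Phi> (u, 0) = 1"
proof
  have "\<Phi> (v, 0) > 0"
    using is_norm_fun_pos[OF norm_fun, of "(v, 0)"] assms by (simp add: zero_prod_def)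
  then show "\<Phi> ((1 / \<Phi> (v, 0)) *\<^sub>R v, 0) = 1"
    using norm_fun_scaleR_pair[of "1 / \<Phi> (v, 0)" v 0] by simp
qed

lemma norm_fun_slice_convex:
  "convex_on {p. fst p \<ge> 0 \<and> snd p \<ge> 0} (\<lambda>p. \<Phi> (fst p *\<^sub>R u, snd p))"
proof -
  have "linear (\<lambda>p :: real \<times> real. (fst p *\<^sub>R u, snd p))"
    by (intro linearI) (auto simp: scaleR_add_left)
  then show ?thesis
    using convex_on_compose_linear[OF is_norm_funD(1)[OF norm_fun]] convex_nonneg_quadrant
    by blast
qed

end

context
  fixes \<Phi> :: "(real^'n) \<times> real \<Rightarrow> real" and u :: "real^'n"
  assumes norm_fun: "is_norm_fun \<Phi>"
    and unit: "\<Phi> (u, 0) = 1"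
begin

lemma horizontal_along_unit: "\<Phi> (s *\<^sub>R u, 0) = \<bar>s\<bar>"
  using norm_fun_scaleR_pair[OF norm_fun, of s u 0] unit by simp

lemma partially_monotoneD:
  assumes "partially_monotone \<Phi>" and "\<Phi> (a, 0) \<le> \<Phi> (a', 0)" and "\<bar>t\<bar> \<le> \<bar>t'\<bar>"
  shows "\<Phi> (a, t) \<le> \<Phi> (a', t')"
  using assms norm_fun_vertical_le_iff[OF norm_fun] unfolding partially_monotone_def by blast

lemma partially_monotone_reduces_to_unit_line:
  assumes "partially_monotone \<Phi>"
  shows "\<Phi> (a, t) = \<Phi> (\<Phi> (a, 0) *\<^sub>R u, \<bar>t\<bar>)"
proof -
  let ?a = "\<Phi> (a, 0) *\<^sub>R u"
  have same_horizontal: "\<Phi> (?a, 0) = \<Phi> (a, 0)"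
    unfolding horizontal_along_unit using is_norm_funD(2)[OF norm_fun] by simp
  show ?thesis
  proof (rule antisym)
    show "\<Phi> (a, t) \<le> \<Phi> (?a, \<bar>t\<bar>)"
      by (rule partially_monotoneD[OF assms]) (simp_all add: same_horizontal)
    show "\<Phi> (?a, \<bar>t\<bar>) \<le> \<Phi> (a, t)"
      by (rule partially_monotoneD[OF assms]) (simp_all add: same_horizontal)
  qed
qed

lemma partially_monotone_slice_mono:
  assumes "partially_monotone \<Phi>" and "0 \<le> s1" "s1 \<le> t1" "0 \<le> s2" "s2 \<le> t2"
  shows "\<Phi> (s1 *\<^sub>R u, s2) \<le> \<Phi> (t1 *\<^sub>R u, t2)"
proof (rule partially_monotoneD[OF assms(1)])
  show "\<Phi> (s1 *\<^sub>R u, 0) \<le> \<Phi> (t1 *\<^sub>R u, 0)"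
    unfolding horizontal_along_unit using assms(2,3) by linarith
  show "\<bar>s2\<bar> \<le> \<bar>t2\<bar>"
    using assms(4,5) by linarith
qed

lemma partially_monotone_unit_slice_profile:
  assumes "partially_monotone \<Phi>"
  shows "monotone_convex_profile \<Phi> (\<lambda>s t. \<Phi> (s *\<^sub>R u, t))"
  unfolding monotone_convex_profile_def
proof (intro conjI allI impI)
  show "\<Phi> (s *\<^sub>R u, t) \<ge> 0" for s t
    by (rule is_norm_funD(2)[OF norm_fun])
  show "\<Phi> ((l * s) *\<^sub>R u, l * t) = l * \<Phi> (s *\<^sub>R u, t)" if "l > 0 \<and> s \<ge> 0 \<and> t \<ge> 0" for l s t
    using norm_fun_scaleR_pair[OF norm_fun, of l "s *\<^sub>R u" t] that by simp
  show "convex_on {p. fst p \<ge> 0 \<and> snd p \<ge> 0} (\<lambda>p. \<Phi> (fst p *\<^sub>R u, snd p))"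
    by (rule norm_fun_slice_convex[OF norm_fun])
  show "\<Phi> (1 *\<^sub>R u, 0) > 0"
    using unit by simp
  show "\<Phi> (0 *\<^sub>R u, 1) > 0"
    using norm_fun_vertical_pos[OF norm_fun] by simp
  show "\<Phi> (s1 *\<^sub>R u, s2) \<le> \<Phi> (t1 *\<^sub>R u, t2)"
    if "0 \<le> s1 \<and> s1 \<le> t1 \<and> 0 \<le> s2 \<and> s2 \<le> t2" for s1 s2 t1 t2
    using partially_monotone_slice_mono[OF assms] that by blast
  show "\<Phi> (a, t) = \<Phi> (\<Phi> (a, 0) *\<^sub>R u, \<bar>t\<bar>)" for a t
    by (rule partially_monotone_reduces_to_unit_line[OF assms])
qed

end

lemma partially_monotone_if_profile:
  fixes \<Phi> :: "(real^'n) \<times> real \<Rightarrow> real"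
  assumes norm_fun: "is_norm_fun \<Phi>" and "monotone_convex_profile \<Phi> \<omega>"
  shows "partially_monotone \<Phi>"
  unfolding partially_monotone_def
proof (intro allI impI)
  have mono: "\<omega> s1 s2 \<le> \<omega> t1 t2" if "0 \<le> s1" "s1 \<le> t1" "0 \<le> s2" "s2 \<le> t2" for s1 s2 t1 t2
    using assms(2) that unfolding monotone_convex_profile_def by blast
  have profile: "\<Phi> (a, t) = \<omega> (\<Phi> (a, 0)) \<bar>t\<bar>" for a t
    using assms(2) unfolding monotone_convex_profile_def by blast
  fix a t a' t'
  assume "\<Phi> (a, 0) \<le> \<Phi> (a', 0) \<and> \<Phi> (0, t) \<le> \<Phi> (0, t')"
  then have "\<omega> (\<Phi> (a, 0)) \<bar>t\<bar> \<le> \<omega> (\<Phi> (a', 0)) \<bar>t'\<bar>"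
    using norm_fun_vertical_le_iff[OF norm_fun, of t t'] is_norm_funD(2)[OF norm_fun, of "(a, 0)"]
    by (intro mono) auto
  then show "\<Phi> (a, t) \<le> \<Phi> (a', t')"
    using profile[of a t] profile[of a' t'] by linarith
qed

lemma partially_monotone_iff_profile:
  fixes \<Phi> :: "(real^'n) \<times> real \<Rightarrow> real"
  assumes "is_norm_fun \<Phi>"
  shows "partially_monotone \<Phi> \<longleftrightarrow> (\<exists>\<omega>. monotone_convex_profile \<Phi> \<omega>)"
proof
  assume "partially_monotone \<Phi>"
  moreover obtain u :: "real^'n" where "\<Phi> (u, 0) = 1"
    using norm_fun_horizontal_unit[OF assms, of "axis undefined 1"] by auto
  ultimately show "\<exists>\<omega>. monotone_convex_profile \<Phi> \<omega>"
    using partially_monotone_unit_slice_profile[OF assms] by blast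
next
  assume "\<exists>\<omega>. monotone_convex_profile \<Phi> \<omega>"
  then show "partially_monotone \<Phi>"
    using partially_monotone_if_profile[OF assms] by blast
qed

theorem propositionA5:
  fixes \<Phi> :: "(real^'n) \<times> real \<Rightarrow> real"
  assumes "is_norm_fun \<Phi>"
  shows "partially_monotone \<Phi> \<longleftrightarrow>
    (\<exists>\<omega> :: real \<Rightarrow> real \<Rightarrow> real.
       (\<forall>s t. s \<ge> 0 \<and> t \<ge> 0 \<longrightarrow> \<omega> s t \<ge> 0)
     \<and> (\<forall>l s t. l > 0 \<and> s \<ge> 0 \<and> t \<ge> 0 \<longrightarrow> \<omega> (l * s) (l * t) = l * \<omega> s t)
     \<and> convex_on {p :: real \<times> real. fst p \<ge> 0 \<and> snd p \<ge> 0} (\<lambda>p. \<omega> (fst p) (snd p))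
     \<and> \<omega> 1 0 > 0 \<and> \<omega> 0 1 > 0
     \<and> (\<forall>s1 s2 t1 t2. 0 \<le> s1 \<and> s1 \<le> t1 \<and> 0 \<le> s2 \<and> s2 \<le> t2 \<longrightarrow> \<omega> s1 s2 \<le> \<omega> t1 t2)
     \<and> (\<forall>\<xi>h \<xi>l. \<Phi> (\<xi>h, \<xi>l) = \<omega> (\<Phi> (\<xi>h, 0)) \<bar>\<xi>l\<bar>))"
  using partially_monotone_iff_profile[OF assms] unfolding monotone_convex_profile_def .

end
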